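(* Let $a\in \mathcal{A}$. Then the following are equivalent: (1) $a$ has a $w$-weighted core inverse. (2) $aw\in \mathcal{A}^{\#}$ and there exists $x\in \mathcal{A}$ such that $xw(aw)^2=aw$, $(wawx)^*=wawx$. (3) $aw\in \mathcal{A}^{\#}$ and there exists $x\in \mathcal{A}$ such that $xw(aw)=aw(aw)^{\#}$, $(wawx)^*=wawx$.
   Context: $\mathcal{A}$ is a complex Banach *-algebra with identity and $w\in\mathcal{A}$. $a$ has a $w$-weighted core inverse if there is $x$ with $a(wx)^2=x$, $(wawx)^*=wawx$, $xw(aw)^2=aw$. $\mathcal{A}^{\#}$ is the set of group invertible elements, $b^{\#}$ the group inverse. *)

theory Defs
  imports "HOL-Analysis.Analysis"
begin

class banach_star_algebra = real_normed_algebra_1 + banach +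
  fixes scaleC :: "complex \<Rightarrow> 'a \<Rightarrow> 'a"
    and star :: "'a \<Rightarrow> 'a"
  assumes scaleC_of_real: "scaleC (complex_of_real r) x = scaleR r x"
    and scaleC_add_right: "scaleC c (x + y) = scaleC c x + scaleC c y"
    and scaleC_add_left: "scaleC (c + d) x = scaleC c x + scaleC d x"
    and scaleC_scaleC: "scaleC c (scaleC d x) = scaleC (c * d) x"
    and scaleC_one: "scaleC 1 x = x"
    and scaleC_left_mult: "scaleC c x * y = scaleC c (x * y)"
    and scaleC_right_mult: "x * scaleC c y = scaleC c (x * y)"
    and norm_scaleC: "norm (scaleC c x) = cmod c * norm x"
    and star_star: "star (star x) = x"
    and star_add: "star (x + y) = star x + star y"
    and star_scaleC: "star (scaleC c x) = scaleC (cnj c) (star x)"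
    and star_mult: "star (x * y) = star y * star x"

definition is_group_inverse :: "'a::ring_1 \<Rightarrow> 'a \<Rightarrow> bool" where
  "is_group_inverse b y \<longleftrightarrow> b * y * b = b \<and> y * b * y = y \<and> b * y = y * b"

definition group_invertible :: "'a::ring_1 \<Rightarrow> bool" where
  "group_invertible b \<longleftrightarrow> (\<exists>y. is_group_inverse b y)"

definition group_inverse :: "'a::ring_1 \<Rightarrow> 'a" where
  "group_inverse b = (THE y. is_group_inverse b y)"

definition is_w_core_inverse :: "'a::banach_star_algebra \<Rightarrow> 'a \<Rightarrow> 'a \<Rightarrow> bool" where
  "is_w_core_inverse w a x \<longleftrightarrow>
     a * (w * x)^2 = x \<and> star (w * a * w * x) = w * a * w * x \<and> x * w * (a * w)^2 = a * w"

definition has_w_core_inverse :: "'a::banach_star_algebra \<Rightarrow> 'a \<Rightarrow> bool" where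
  "has_w_core_inverse w a \<longleftrightarrow> (\<exists>x. is_w_core_inverse w a x)"

end

theory Submission
  imports Defs
begin

text \<open>If \<open>x\<close> is a \<open>w\<close>-weighted core inverse of \<open>a\<close>, then \<open>p = xw\<close> satisfies
  \<open>p(aw)\<^sup>2 = aw\<close> and \<open>aw p\<^sup>2 = p\<close>, so \<open>aw\<close> lies in both \<open>\<A>(aw)\<^sup>2\<close> and \<open>(aw)\<^sup>2\<A>\<close> and is
  group invertible. For group invertible \<open>b = aw\<close>, the equation \<open>xwb\<^sup>2 = b\<close> is equivalent
  to \<open>xwb = bb\<^sup>#\<close> (multiply by \<open>b\<^sup>#\<close> on the right). Conversely, from such an \<open>x\<close>
  the element \<open>b\<^sup>#bx\<close> is a \<open>w\<close>-weighted core inverse; it has the same product \<open>wawx\<close>,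
  so the self-adjointness condition carries over.\<close>

lemma is_group_inverse_unique:
  fixes b :: "'a::ring_1"
  assumes "is_group_inverse b y" "is_group_inverse b z"
  shows "y = z"
proof -
  have h: "b*y*b = b" "y*b*y = y" "b*y = y*b" "b*z*b = b" "z*b*z = z" "b*z = z*b"
    using assms unfolding is_group_inverse_def by auto
  have by_bz: "b*y = b*z"
  proof -
    have "b*y = (b*y)*(b*z)" using h by (metis mult.assoc)
    also have "\<dots> = b*z" using h by (metis mult.assoc)
    finally show ?thesis .
  qed
  have "y = (z*b)*y" using h by_bz by (metis mult.assoc)
  also have "\<dots> = z*(b*z)" using by_bz by (simp add: mult.assoc)
  also have "\<dots> = z" using h by (simp add: mult.assoc)
  finally show ?thesis .
qed

lemma is_group_inverse_group_inverse:
  fixes b :: "'a::ring_1"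
  assumes "group_invertible b"
  shows "is_group_inverse b (group_inverse b)"
  using assms is_group_inverse_unique unfolding group_invertible_def group_inverse_def
  by (metis theI)

lemma group_invertibleI:
  fixes b :: "'a::ring_1"
  assumes left: "b = u*b^2" and right: "b = b^2 * v"
  shows "group_invertible b"
proof -
  define e where "e = b * v"
  have ub: "u*b = e" using assms unfolding e_def by (metis mult.assoc power2_eq_square)
  have eb: "e*b = b" using left ub by (metis mult.assoc power2_eq_square)
  have be: "b*e = b" using right unfolding e_def by (simp add: power2_eq_square mult.assoc)
  have ee: "e*e = e" using eb unfolding e_def by (metis mult.assoc)
  define y where "y = e * v"
  have "y = u * e" using ub unfolding y_def e_def by (metis mult.assoc)
  then have y_b: "y*b = e" using eb ub by (simp add: mult.assoc)
  have b_y: "b*y = e" unfolding y_def using be by (simp add: e_def mult.assoc[symmetric])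
  have "y*b*y = y" unfolding y_b unfolding y_def using ee by (simp add: mult.assoc[symmetric])
  then have "is_group_inverse b y"
    unfolding is_group_inverse_def using b_y y_b eb by simp
  then show ?thesis unfolding group_invertible_def by blast
qed

lemma group_invertible_if_square_factors:
  fixes a w x :: "'a::ring_1"
  assumes outer: "a*(w*x)^2 = x" and left: "x*w*(a*w)^2 = a*w"
  shows "group_invertible (a*w)"
proof -
  define b p where "b = a*w" and "p = x*w"
  have pbb: "p*b^2 = b" using left unfolding b_def p_def .
  have bpp: "b*p^2 = p" using outer unfolding b_def p_def power2_eq_square
    by (metis mult.assoc)
  have "b = b*p*b" using pbb bpp unfolding power2_eq_square by (metis mult.assoc)
  then have "b = b^2*(p^2*b)" using bpp unfolding power2_eq_square by (metis mult.assoc)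
  then show ?thesis using group_invertibleI pbb unfolding b_def by metis
qed

lemma mult_eq_group_projection:
  fixes b y :: "'a::ring_1"
  assumes "group_invertible b" and "y*b^2 = b"
  shows "y*b = b * group_inverse b"
proof -
  define g where "g = group_inverse b"
  have "b*g*b = b" "b*g = g*b"
    using is_group_inverse_group_inverse[OF assms(1)]
    unfolding g_def is_group_inverse_def by auto
  then have "y*b = y*b^2*g" by (metis mult.assoc power2_eq_square)
  then show ?thesis using assms(2) unfolding g_def by simp
qed

lemma is_w_core_inverse_from_group_projection:
  fixes a w x :: "'a::banach_star_algebra"
  assumes gi: "group_invertible (a*w)"
    and proj: "x*w*(a*w) = a*w * group_inverse (a*w)"
    and sa: "star (w*a*w*x) = w*a*w*x"
  shows "is_w_core_inverse w a (group_inverse (a*w) * (a*w) * x)"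
proof -
  define b g where "b = a*w" and "g = group_inverse (a*w)"
  have gg: "b*g*b = b" "g*b*g = g" "b*g = g*b"
    using is_group_inverse_group_inverse[OF gi]
    unfolding b_def g_def is_group_inverse_def by auto
  have proj': "x*w*b = b*g" using proj unfolding b_def g_def .
  have bgg: "b*g*g = g" and gbb: "g*b*b = b" using gg by (metis mult.assoc)+
  have xwg: "x*w*g = g*g"
    using proj' bgg by (metis mult.assoc)
  define z where "z = g*b*x"
  have "a*(w*z)^2 = b*g*b*(x*w*g)*b*x"
    unfolding z_def b_def power2_eq_square by (simp add: mult.assoc)
  also have "\<dots> = z" unfolding z_def using gg xwg bgg by (simp add: mult.assoc)
  finally have outer: "a*(w*z)^2 = z" .
  have same_product: "w*a*w*z = w*a*w*x"
    unfolding z_def using gg unfolding b_def by (metis mult.assoc)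
  have "z*w*(a*w)^2 = g*b*(x*w*b)*b"
    unfolding z_def b_def power2_eq_square by (simp add: mult.assoc)
  also have "\<dots> = b" using proj' gbb gg by (metis mult.assoc)
  finally have left: "z*w*(a*w)^2 = a*w" unfolding b_def .
  have "is_w_core_inverse w a z"
    unfolding is_w_core_inverse_def using outer same_product left sa by simp
  then show ?thesis unfolding z_def g_def b_def .
qed

theorem corollary2p5:
  fixes a w :: "'a::banach_star_algebra"
  shows "(has_w_core_inverse w a \<longleftrightarrow>
           (group_invertible (a * w) \<and>
            (\<exists>x. x * w * (a * w)^2 = a * w \<and> star (w * a * w * x) = w * a * w * x)))
       \<and> (has_w_core_inverse w a \<longleftrightarrow>
           (group_invertible (a * w) \<and>
            (\<exists>x. x * w * (a * w) = a * w * group_inverse (a * w) \<and>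
                 star (w * a * w * x) = w * a * w * x)))"
proof -
  have one_two: "group_invertible (a*w) \<and>
      (\<exists>x. x * w * (a * w)^2 = a * w \<and> star (w * a * w * x) = w * a * w * x)"
    if core: "has_w_core_inverse w a"
  proof -
    obtain x where "is_w_core_inverse w a x"
      using core unfolding has_w_core_inverse_def by blast
    then show ?thesis
      using group_invertible_if_square_factors unfolding is_w_core_inverse_def by blast
  qed
  have two_three: "x * w * (a * w) = a * w * group_inverse (a * w)"
    if "group_invertible (a*w)" "x * w * (a * w)^2 = a * w" for x
    using mult_eq_group_projection[of "a*w" "x*w"] that by (simp add: mult.assoc)
  have three_one: "has_w_core_inverse w a"
    if "group_invertible (a*w)" "x * w * (a * w) = a * w * group_inverse (a * w)"
      "star (w * a * w * x) = w * a * w * x" for x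
    using is_w_core_inverse_from_group_projection[OF that] has_w_core_inverse_def by blast
  show ?thesis using one_two two_three three_one by blast
qed

end
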